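(* Consider the hardware trojan detection game specified in the context. Under EUT there exists a fine value $F^v_{\mathrm{EUT}}$, and under PT there exists a fine value $F^v_{\mathrm{PT}}$, such that when $F$ equals that value, at the mixed-strategy Nash equilibrium neither the attacker nor the defender wins. That is, the equilibrium expected utilities of both players are equal to $0$.
   Context: <p><b>Players and strategies.</b> There are two players, an attacker $a$ and a defender $d$. The trojan types are $\mathcal{T}=\{A,B,C,D\}$, with damages $V_A=1$, $V_B=2$, $V_C=4$, $V_D=12$. Every type has the same fine $F$.</p> <p>The attacker's pure strategy set is $\mathcal{S}_a=\mathcal{T}$. The defender's pure strategy set $\mathcal{S}_d=\{AB,AC,AD,BC,BD,CD\}$ consists of the 2-element subsets of $\mathcal{T}$.</p> <p><b>Payoffs.</b> $u_d(s_d,s_a)=F$ if $s_a\in s_d$, and $u_d(s_d,s_a)=-V_{s_a}$ otherwise. The game is zero-sum: $u_a=-u_d$.</p> <p>Mixed strategies are probability vectors $\boldsymbol{p}_d$ on $\mathcal{S}_d$ and $\boldsymbol{p}_a$ on $\mathcal{S}_a$.</p> <p><b>EUT utility.</b> $U_i^{\mathrm{EUT}}(\boldsymbol{p}_d,\boldsymbol{p}_a)=\sum_{s_d,s_a}p_d(s_d)p_a(s_a)u_i(s_d,s_a)$.</p> <p><b>PT utility.</b> Each player $i$ has a parameter $\alpha_i\in(0,1]$ and the weighting function $w_i(p)=\exp(-(-\ln p)^{\alpha_i})$, with $w_i(0)=0$. For player $i$ with opponent $j$, $U_i^{\mathrm{PT}}(\boldsymbol{p}_i,\boldsymbol{p}_j)=\sum_{s_i,s_j}p_i(s_i)\,w_i(p_j(s_j))\,u_i(s_i,s_j)$.</p>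 <p><b>MSNE.</b> A mixed-strategy Nash equilibrium is a profile from which neither player can increase its utility ($U^{\mathrm{EUT}}$ or $U^{\mathrm{PT}}$, respectively) by unilateral deviation.</p> <p><b>Winning.</b> A player "wins" if its equilibrium expected utility is positive.</p> *)

theory Defs
  imports Complex_Main
begin

datatype trojan = TA | TB | TC | TD

fun dmg :: "trojan \<Rightarrow> real" where
  "dmg TA = 1" | "dmg TB = 2" | "dmg TC = 4" | "dmg TD = 12"

definition Sa :: "trojan set" where
  "Sa = {TA, TB, TC, TD}"

definition Sd :: "trojan set set" where
  "Sd = {{TA,TB}, {TA,TC}, {TA,TD}, {TB,TC}, {TB,TD}, {TC,TD}}"

definition ud :: "real \<Rightarrow> trojan set \<Rightarrow> trojan \<Rightarrow> real" where
  "ud F sd sa = (if sa \<in> sd then F else - dmg sa)"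

definition ua :: "real \<Rightarrow> trojan set \<Rightarrow> trojan \<Rightarrow> real" where
  "ua F sd sa = - ud F sd sa"

definition mixed :: "'s set \<Rightarrow> ('s \<Rightarrow> real) \<Rightarrow> bool" where
  "mixed S p \<longleftrightarrow> (\<forall>s\<in>S. 0 \<le> p s) \<and> sum p S = 1"

definition U_EUT_d :: "real \<Rightarrow> (trojan set \<Rightarrow> real) \<Rightarrow> (trojan \<Rightarrow> real) \<Rightarrow> real" where
  "U_EUT_d F pd pa = (\<Sum>sd\<in>Sd. \<Sum>sa\<in>Sa. pd sd * pa sa * ud F sd sa)"

definition U_EUT_a :: "real \<Rightarrow> (trojan set \<Rightarrow> real) \<Rightarrow> (trojan \<Rightarrow> real) \<Rightarrow> real" where
  "U_EUT_a F pd pa = (\<Sum>sd\<in>Sd. \<Sum>sa\<in>Sa. pd sd * pa sa * ua F sd sa)"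

definition wgt :: "real \<Rightarrow> real \<Rightarrow> real" where
  "wgt \<alpha> p = (if p = 0 then 0 else exp (- ((- ln p) powr \<alpha>)))"

definition U_PT_d :: "real \<Rightarrow> real \<Rightarrow> (trojan set \<Rightarrow> real) \<Rightarrow> (trojan \<Rightarrow> real) \<Rightarrow> real" where
  "U_PT_d \<alpha>d F pd pa = (\<Sum>sd\<in>Sd. \<Sum>sa\<in>Sa. pd sd * wgt \<alpha>d (pa sa) * ud F sd sa)"

definition U_PT_a :: "real \<Rightarrow> real \<Rightarrow> (trojan set \<Rightarrow> real) \<Rightarrow> (trojan \<Rightarrow> real) \<Rightarrow> real" where
  "U_PT_a \<alpha>a F pd pa = (\<Sum>sa\<in>Sa. \<Sum>sd\<in>Sd. pa sa * wgt \<alpha>a (pd sd) * ua F sd sa)"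

definition is_MSNE ::
  "((trojan set \<Rightarrow> real) \<Rightarrow> (trojan \<Rightarrow> real) \<Rightarrow> real) \<Rightarrow>
   ((trojan set \<Rightarrow> real) \<Rightarrow> (trojan \<Rightarrow> real) \<Rightarrow> real) \<Rightarrow>
   (trojan set \<Rightarrow> real) \<Rightarrow> (trojan \<Rightarrow> real) \<Rightarrow> bool" where
  "is_MSNE Ud Ua pd pa \<longleftrightarrow>
     mixed Sd pd \<and> mixed Sa pa \<and>
     (\<forall>pd'. mixed Sd pd' \<longrightarrow> Ud pd' pa \<le> Ud pd pa) \<and>
     (\<forall>pa'. mixed Sa pa' \<longrightarrow> Ua pd pa' \<le> Ua pd pa)"

definition MSNE_EUT :: "real \<Rightarrow> (trojan set \<Rightarrow> real) \<Rightarrow> (trojan \<Rightarrow> real) \<Rightarrow> bool" where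
  "MSNE_EUT F = is_MSNE (U_EUT_d F) (U_EUT_a F)"

definition MSNE_PT :: "real \<Rightarrow> real \<Rightarrow> real \<Rightarrow> (trojan set \<Rightarrow> real) \<Rightarrow> (trojan \<Rightarrow> real) \<Rightarrow> bool" where
  "MSNE_PT \<alpha>d \<alpha>a F = is_MSNE (U_PT_d \<alpha>d F) (U_PT_a \<alpha>a F)"

end

(*
  Let c_t = V_t / (F + V_t): inspecting type t with probability c_t makes the attacker
  indifferent about inserting t.  The defender inspects two types, so a defender strategy
  with these marginals exists once the c_t sum to 2, which determines the fine F (it lies
  in [3, 4]).  Dually, attacker probabilities proportional to 1 / (F + V_t) make every
  inspected pair worth 0 to the defender.  Against these equalizers each player secures 0,
  so both equilibrium payoffs are nonnegative; by best-response indifference each payoff,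
  multiplied by the total perceived weight of the opponent's strategy, equals minus the
  other one, so both vanish.  This only uses that the probability weighting is
  nonnegative and zero exactly at 0, so it covers EUT and PT alike.  An equilibrium
  exists because the Prelec function can be inverted: choose strategies whose perceived
  weights are proportional to the equalizers, and every deviation then yields 0.
*)

theory Submission
  imports Defs
begin

definition row_payoff ::
  "(real \<Rightarrow> real) \<Rightarrow> 'r set \<Rightarrow> 'c set \<Rightarrow> ('r \<Rightarrow> 'c \<Rightarrow> real) \<Rightarrow> ('r \<Rightarrow> real) \<Rightarrow> ('c \<Rightarrow> real) \<Rightarrow> real"
  where "row_payoff w R C u p q = (\<Sum>r\<in>R. \<Sum>c\<in>C. p r * w (q c) * u r c)"

definition col_payoff ::
  "(real \<Rightarrow> real) \<Rightarrow> 'r set \<Rightarrow> 'c set \<Rightarrow> ('r \<Rightarrow> 'c \<Rightarrow> real) \<Rightarrow> ('r \<Rightarrow> real) \<Rightarrow> ('c \<Rightarrow> real) \<Rightarrow> real"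
  where "col_payoff w R C u p q = (\<Sum>c\<in>C. \<Sum>r\<in>R. q c * w (p r) * - u r c)"

lemma row_payoff_by_rows:
  "row_payoff w R C u p q = (\<Sum>r\<in>R. p r * (\<Sum>c\<in>C. w (q c) * u r c))"
  unfolding row_payoff_def by (simp add: sum_distrib_left mult.assoc)

lemma col_payoff_by_cols:
  "col_payoff w R C u p q = (\<Sum>c\<in>C. q c * (\<Sum>r\<in>R. w (p r) * - u r c))"
  unfolding col_payoff_def by (simp add: sum_distrib_left mult.assoc)

lemma mixed_pure: "finite S \<Longrightarrow> s \<in> S \<Longrightarrow> mixed S (\<lambda>x. if x = s then 1 else 0)"
  unfolding mixed_def by simp

lemma best_response_indifference:
  fixes v :: "'s \<Rightarrow> real"
  assumes S: "finite S" and p: "mixed S p"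
    and best: "\<And>p'. mixed S p' \<Longrightarrow> (\<Sum>s\<in>S. p' s * v s) \<le> (\<Sum>s\<in>S. p s * v s)"
    and s: "s \<in> S" "p s \<noteq> 0"
  shows "v s = (\<Sum>s\<in>S. p s * v s)"
proof -
  define V where "V = (\<Sum>s\<in>S. p s * v s)"
  have le: "v x \<le> V" if "x \<in> S" for x
    using best[OF mixed_pure[OF S that]] S that
    by (simp add: V_def if_distrib[of "\<lambda>a. a * _"] cong: if_cong)
  have "(\<Sum>x\<in>S. p x * (V - v x)) = sum p S * V - (\<Sum>x\<in>S. p x * v x)"
    by (simp add: right_diff_distrib sum_subtractf sum_distrib_right)
  also have "\<dots> = 0" using p by (simp add: mixed_def V_def)
  finally have "p s * (V - v s) = 0"
    using sum_nonneg_eq_0_iff[OF S, of "\<lambda>x. p x * (V - v x)"] p le s(1) by (simp add: mixed_def)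
  then show ?thesis using s(2) by (simp add: V_def)
qed

lemma row_payoff_eq_0_if_equalizing:
  assumes "\<And>c. c \<in> C \<Longrightarrow> (\<Sum>r\<in>R. \<sigma> r * u r c) = 0"
  shows "row_payoff w R C u \<sigma> q = 0"
proof -
  have "row_payoff w R C u \<sigma> q = (\<Sum>c\<in>C. w (q c) * (\<Sum>r\<in>R. \<sigma> r * u r c))"
    unfolding row_payoff_def by (subst sum.swap) (simp add: sum_distrib_left ac_simps)
  then show ?thesis using assms by simp
qed

lemma col_payoff_eq_0_if_equalizing:
  assumes "\<And>r. r \<in> R \<Longrightarrow> (\<Sum>c\<in>C. \<tau> c * u r c) = 0"
  shows "col_payoff w R C u p \<tau> = 0"
proof -
  have "col_payoff w R C u p \<tau> = - (\<Sum>r\<in>R. w (p r) * (\<Sum>c\<in>C. \<tau> c * u r c))"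
    unfolding col_payoff_def by (subst sum.swap) (simp add: sum_distrib_left sum_negf ac_simps)
  then show ?thesis using assms by simp
qed

lemma row_payoff_eq_0_if_weights_equalizing:
  assumes "\<And>c. c \<in> C \<Longrightarrow> w (q c) = l * \<tau> c"
    and "\<And>r. r \<in> R \<Longrightarrow> (\<Sum>c\<in>C. \<tau> c * u r c) = 0"
  shows "row_payoff w R C u p q = 0"
proof -
  have "row_payoff w R C u p q = (\<Sum>r\<in>R. p r * (l * (\<Sum>c\<in>C. \<tau> c * u r c)))"
    unfolding row_payoff_by_rows using assms(1) by (simp add: sum_distrib_left mult.assoc)
  then show ?thesis using assms(2) by simp
qed

lemma col_payoff_eq_0_if_weights_equalizing:
  assumes "\<And>r. r \<in> R \<Longrightarrow> w (p r) = m * \<sigma> r"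
    and "\<And>c. c \<in> C \<Longrightarrow> (\<Sum>r\<in>R. \<sigma> r * u r c) = 0"
  shows "col_payoff w R C u p q = 0"
proof -
  have "col_payoff w R C u p q = (\<Sum>c\<in>C. q c * (- m * (\<Sum>r\<in>R. \<sigma> r * u r c)))"
    unfolding col_payoff_by_cols using assms(1) by (simp add: sum_distrib_left mult.assoc sum_negf)
  then show ?thesis using assms(2) by simp
qed

definition prob_weighting :: "(real \<Rightarrow> real) \<Rightarrow> bool" where
  "prob_weighting w \<longleftrightarrow> (\<forall>x\<ge>0. 0 \<le> w x \<and> (w x = 0 \<longleftrightarrow> x = 0))"

lemma prob_weighting_id: "prob_weighting (\<lambda>x. x)"
  by (simp add: prob_weighting_def)

lemma prob_weighting_wgt: "prob_weighting (wgt a)"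
  by (simp add: prob_weighting_def wgt_def)

lemma sum_weight_mixed_pos:
  assumes "finite S" "mixed S p" and "prob_weighting w"
  shows "0 < (\<Sum>s\<in>S. w (p s))"
proof -
  obtain s where s: "s \<in> S" "p s \<noteq> 0"
    using assms(2) unfolding mixed_def by (metis sum.neutral zero_neq_one)
  have "0 < w (p s)" using s assms(2,3) unfolding mixed_def prob_weighting_def by force
  then show ?thesis using s assms unfolding mixed_def prob_weighting_def
    by (intro sum_pos2[where i=s]) auto
qed

lemma weighted_game_value_eq_0:
  fixes u :: "'r \<Rightarrow> 'c \<Rightarrow> real"
  assumes R: "finite R" and C: "finite C"
    and wr: "prob_weighting wr" and wc: "prob_weighting wc"
    and p: "mixed R p" and q: "mixed C q"
    and p_best: "\<And>p'. mixed R p' \<Longrightarrow> row_payoff wr R C u p' q \<le> row_payoff wr R C u p q"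
    and q_best: "\<And>q'. mixed C q' \<Longrightarrow> col_payoff wc R C u p q' \<le> col_payoff wc R C u p q"
    and \<sigma>: "mixed R \<sigma>" "\<And>c. c \<in> C \<Longrightarrow> (\<Sum>r\<in>R. \<sigma> r * u r c) = 0"
    and \<tau>: "mixed C \<tau>" "\<And>r. r \<in> R \<Longrightarrow> (\<Sum>c\<in>C. \<tau> c * u r c) = 0"
  shows "row_payoff wr R C u p q = 0 \<and> col_payoff wc R C u p q = 0"
proof -
  define D where "D r = (\<Sum>c\<in>C. wr (q c) * u r c)" for r
  define A where "A c = (\<Sum>r\<in>R. wc (p r) * - u r c)" for c
  define M where "M = row_payoff wr R C u p q"
  define N where "N = col_payoff wc R C u p q"
  have M: "M = (\<Sum>r\<in>R. p r * D r)" and N: "N = (\<Sum>c\<in>C. q c * A c)"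
    by (simp_all add: M_def N_def D_def A_def row_payoff_by_rows col_payoff_by_cols)
  have "row_payoff wr R C u \<sigma> q = 0" using \<sigma>(2) by (rule row_payoff_eq_0_if_equalizing)
  then have "0 \<le> M" using p_best[OF \<sigma>(1)] by (simp add: M_def)
  moreover have "col_payoff wc R C u p \<tau> = 0" using \<tau>(2) by (rule col_payoff_eq_0_if_equalizing)
  then have "0 \<le> N" using q_best[OF \<tau>(1)] by (simp add: N_def)
  moreover have row_sum: "(\<Sum>r\<in>R. wc (p r) * D r) = M * (\<Sum>r\<in>R. wc (p r))"
  proof -
    have "wc (p r) * D r = M * wc (p r)" if "r \<in> R" for r
      using best_response_indifference[OF R p _ that, of D] p_best wc
      by (cases "p r = 0") (auto simp: M row_payoff_by_rows D_def prob_weighting_def)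
    then show ?thesis unfolding sum_distrib_left by (intro sum.cong) auto
  qed
  moreover have col_sum: "(\<Sum>c\<in>C. wr (q c) * A c) = N * (\<Sum>c\<in>C. wr (q c))"
  proof -
    have "wr (q c) * A c = N * wr (q c)" if "c \<in> C" for c
      using best_response_indifference[OF C q _ that, of A] q_best wr
      by (cases "q c = 0") (auto simp: N col_payoff_by_cols A_def prob_weighting_def)
    then show ?thesis unfolding sum_distrib_left by (intro sum.cong) auto
  qed
  moreover have "(\<Sum>r\<in>R. wc (p r) * D r) = - (\<Sum>c\<in>C. wr (q c) * A c)"
  proof -
    have "(\<Sum>r\<in>R. wc (p r) * D r) = (\<Sum>r\<in>R. \<Sum>c\<in>C. wc (p r) * wr (q c) * u r c)"
      by (simp add: D_def sum_distrib_left ac_simps)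
    also have "\<dots> = (\<Sum>c\<in>C. \<Sum>r\<in>R. wc (p r) * wr (q c) * u r c)"
      by (rule sum.swap)
    also have "\<dots> = - (\<Sum>c\<in>C. wr (q c) * A c)"
      by (simp add: A_def sum_distrib_left sum_negf ac_simps)
    finally show ?thesis .
  qed
  moreover have weights_pos: "0 < (\<Sum>r\<in>R. wc (p r))" "0 < (\<Sum>c\<in>C. wr (q c))"
    using sum_weight_mixed_pos R C p q wr wc by blast+
  ultimately have "M * (\<Sum>r\<in>R. wc (p r)) + N * (\<Sum>c\<in>C. wr (q c)) = 0"
    and "0 \<le> M * (\<Sum>r\<in>R. wc (p r))" "0 \<le> N * (\<Sum>c\<in>C. wr (q c))"
    by simp_all
  then have "M * (\<Sum>r\<in>R. wc (p r)) = 0" "N * (\<Sum>c\<in>C. wr (q c)) = 0"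
    by (simp_all add: add_nonneg_eq_0_iff)
  then have "M = 0" "N = 0"
    using weights_pos by simp_all
  then show ?thesis by (simp add: M_def N_def)
qed

definition prelec_inv :: "real \<Rightarrow> real \<Rightarrow> real" where
  "prelec_inv a y = (if y = 0 then 0 else exp (- ((- ln y) powr (1/a))))"

lemma wgt_prelec_inv:
  assumes "0 < a" "0 \<le> y" "y \<le> 1"
  shows "wgt a (prelec_inv a y) = y"
proof (cases "y = 0")
  case True then show ?thesis by (simp add: prelec_inv_def wgt_def)
next
  case False
  then have y: "0 < y" using assms by simp
  have nl: "0 \<le> - ln y" using y assms by simp
  have "((- ln y) powr (1/a)) powr a = - ln y"
    using nl assms by (simp add: powr_powr powr_one)
  then show ?thesis using y False by (simp add: prelec_inv_def wgt_def)
qed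

lemma prelec_inv_nonneg: "0 \<le> prelec_inv a y" by (simp add: prelec_inv_def)

lemma prelec_inv_le_self:
  assumes "0 < a" "a \<le> 1" "0 \<le> y" "y \<le> exp (-1)"
  shows "prelec_inv a y \<le> y"
proof (cases "y = 0")
  case True then show ?thesis by (simp add: prelec_inv_def)
next
  case False
  then have y: "0 < y" using assms by simp
  have "ln y \<le> -1" using y assms(4) by (metis ln_exp ln_le_cancel_iff exp_gt_zero)
  then have "- ln y \<le> (- ln y) powr (1/a)"
    using powr_mono[of 1 "1/a" "- ln y"] assms(1,2) by simp
  then have "exp (- ((- ln y) powr (1/a))) \<le> exp (ln y)" by simp
  then show ?thesis using y by (simp add: prelec_inv_def)
qed

lemma continuous_on_prelec_inv:
  assumes "0 < a"
  shows "continuous_on {0<..1} (prelec_inv a)"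
proof -
  have "continuous_on {0<..1} (\<lambda>y. exp (- ((- ln y) powr (1/a))))"
    using assms by (intro continuous_on_exp continuous_on_minus continuous_on_powr' continuous_intros) auto
  then show ?thesis
    by (rule continuous_on_cong[THEN iffD1, rotated 2]) (auto simp: prelec_inv_def)
qed

text \<open>The total mass of the inverse weights of l c is continuous in l, at most 1 at
  l = 1/e (where the inverse lies below the identity because a \<le> 1) and at least 1 at
  l = 1 / max c, so the intermediate value theorem yields the scale.\<close>

lemma ex_mixed_wgt_proportional:
  fixes c :: "'s \<Rightarrow> real"
  assumes a: "0 < a" "a \<le> 1" and S: "finite S" and c: "mixed S c"
  shows "\<exists>p l. mixed S p \<and> 0 < l \<and> (\<forall>s\<in>S. wgt a (p s) = l * c s)"
proof -
  have c_nonneg: "\<And>s. s \<in> S \<Longrightarrow> 0 \<le> c s" and c_sum: "sum c S = 1"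
    using c by (auto simp: mixed_def)
  then have "S \<noteq> {}" by auto
  define m where "m = Max (c ` S)"
  have "m \<in> c ` S" using S \<open>S \<noteq> {}\<close> unfolding m_def by simp
  then obtain s0 where s0: "s0 \<in> S" "c s0 = m" by auto
  have c_le_m: "c s \<le> m" if "s \<in> S" for s using S that unfolding m_def by simp
  have "m \<le> 1" using member_le_sum[of s0 S c] c_nonneg c_sum s0 S by simp
  have "0 < m"
  proof (rule ccontr)
    assume "\<not> 0 < m"
    then have "\<forall>s\<in>S. c s = 0" using c_le_m c_nonneg by force
    then show False using c_sum by simp
  qed
  have scaled_le_1: "l * c s \<le> 1" if "l \<le> 1/m" "s \<in> S" for l s
  proof -
    have "l * c s \<le> 1/m * c s" using that c_nonneg by (intro mult_right_mono) auto
    also have "\<dots> \<le> 1/m * m" using that c_le_m \<open>0 < m\<close> by (intro mult_left_mono) auto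
    finally show ?thesis using \<open>0 < m\<close> by simp
  qed
  define h where "h l = (\<Sum>s\<in>S. prelec_inv a (l * c s))" for l
  define l0 where "l0 = exp (-1::real)"
  have "0 < l0" "l0 \<le> 1" by (simp_all add: l0_def)
  moreover have "1 \<le> 1/m" using \<open>0 < m\<close> \<open>m \<le> 1\<close> by simp
  ultimately have "l0 \<le> 1/m" by linarith
  have "h l0 \<le> (\<Sum>s\<in>S. l0 * c s)"
    unfolding h_def
  proof (intro sum_mono prelec_inv_le_self[OF a])
    fix s assume "s \<in> S"
    then have "0 \<le> c s" "c s \<le> 1" using c_nonneg c_le_m \<open>m \<le> 1\<close> by force+
    then show "0 \<le> l0 * c s" "l0 * c s \<le> exp (-1)"
      using \<open>0 < l0\<close> mult_left_le[of "c s" l0] by (auto simp: l0_def)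
  qed
  also have "\<dots> = l0" using c_sum by (simp add: sum_distrib_left[symmetric])
  finally have "h l0 \<le> 1" using \<open>l0 \<le> 1\<close> by simp
  moreover have "1 \<le> h (1/m)"
  proof -
    have "prelec_inv a (1/m * c s0) = 1" using s0 \<open>0 < m\<close> by (simp add: prelec_inv_def)
    then show ?thesis
      using member_le_sum[of s0 S "\<lambda>s. prelec_inv a (1/m * c s)"] s0 S
      by (simp add: h_def prelec_inv_nonneg)
  qed
  moreover have "continuous_on {l0..1/m} h"
    unfolding h_def
  proof (intro continuous_on_sum)
    fix s assume s: "s \<in> S"
    show "continuous_on {l0..1/m} (\<lambda>l. prelec_inv a (l * c s))"
    proof (cases "c s = 0")
      case True then show ?thesis by (simp add: prelec_inv_def)
    next
      case False
      then have "(\<lambda>l. l * c s) ` {l0..1/m} \<subseteq> {0<..1}"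
        using \<open>0 < l0\<close> c_nonneg[OF s] scaled_le_1[OF _ s] by (auto simp: less_le)
      then show ?thesis
        by (intro continuous_on_compose2[OF continuous_on_prelec_inv[OF a(1)]] continuous_intros)
    qed
  qed
  ultimately obtain l where l: "l0 \<le> l" "l \<le> 1/m" "h l = 1"
    using IVT'[of h l0 1 "1/m"] \<open>l0 \<le> 1/m\<close> by auto
  define p where "p s = prelec_inv a (l * c s)" for s
  have "mixed S p" using l unfolding mixed_def p_def h_def by (simp add: prelec_inv_nonneg)
  moreover have "wgt a (p s) = l * c s" if "s \<in> S" for s
    unfolding p_def using a \<open>0 < l0\<close> l c_nonneg[OF that] scaled_le_1[OF l(2) that]
    by (intro wgt_prelec_inv) auto
  ultimately show ?thesis using \<open>0 < l0\<close> l(1) by (intro exI[of _ p] exI[of _ l]) auto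
qed
definition coverage :: "real \<Rightarrow> trojan \<Rightarrow> real" where
  "coverage F t = dmg t / (F + dmg t)"

lemma sum_Sa: "(\<Sum>t\<in>Sa. f t) = f TA + f TB + f TC + f TD"
  by (simp add: Sa_def algebra_simps)

lemma dmg_pos: "0 < dmg t"
  by (cases t) simp_all

lemma coverage_indifferent:
  assumes "0 \<le> F" shows "(F + dmg t) * coverage F t = dmg t"
  using dmg_pos[of t] assms by (simp add: coverage_def)

lemma ex_fine_total_coverage_2: "\<exists>F. 3 \<le> F \<and> F \<le> 4 \<and> (\<Sum>t\<in>Sa. coverage F t) = 2"
proof -
  have "\<exists>F. 3 \<le> F \<and> F \<le> 4 \<and> (\<lambda>F::real. 1/(F+1) + 2/(F+2) + 4/(F+4) + 12/(F+12)) F = 2"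
    by (rule IVT2') (auto intro!: continuous_intros)
  then show ?thesis by (simp add: sum_Sa coverage_def)
qed

lemma sum_mult_ud:
  "(\<Sum>sd\<in>S. \<sigma> sd * ud F sd t) = (F + dmg t) * (\<Sum>sd\<in>S. if t \<in> sd then \<sigma> sd else 0) - dmg t * sum \<sigma> S"
  unfolding sum_distrib_left sum_subtractf[symmetric] by (rule sum.cong) (auto simp: ud_def algebra_simps)

lemma attacker_equalizer:
  assumes "0 \<le> F" and total: "(\<Sum>t\<in>Sa. coverage F t) = 2"
  shows "\<exists>\<tau>. mixed Sa \<tau> \<and> (\<forall>sd\<in>Sd. (\<Sum>t\<in>Sa. \<tau> t * ud F sd t) = 0)"
proof -
  define e where "e t = 1 / (F + dmg t)" for t
  have e_pos: "0 < e t" for t using dmg_pos[of t] assms(1) by (simp add: e_def)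
  have "e t * ud F sd t = of_bool (t \<in> sd) - coverage F t" for sd t
    using dmg_pos[of t] assms(1) by (auto simp: ud_def e_def coverage_def field_simps)
  then have e_equalizes: "(\<Sum>t\<in>Sa. e t * ud F sd t) = 0" if "sd \<in> Sd" for sd
    using total that by (auto simp: Sd_def sum_Sa)
  define \<tau> where "\<tau> t = e t / (\<Sum>t\<in>Sa. e t)" for t
  have "0 < (\<Sum>t\<in>Sa. e t)" using e_pos by (simp add: Sa_def add_pos_pos)
  then have "mixed Sa \<tau>"
    using e_pos by (simp add: mixed_def \<tau>_def sum_divide_distrib[symmetric] less_imp_le)
  moreover have "(\<Sum>t\<in>Sa. \<tau> t * ud F sd t) = 0" if "sd \<in> Sd" for sd
    using e_equalizes[OF that] by (simp add: \<tau>_def sum_divide_distrib[symmetric])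
  ultimately show ?thesis by blast
qed

lemma defender_equalizer:
  assumes "0 \<le> F" "F \<le> 4" and total: "(\<Sum>t\<in>Sa. coverage F t) = 2"
  shows "\<exists>\<sigma>. mixed Sd \<sigma> \<and> (\<forall>t\<in>Sa. (\<Sum>sd\<in>Sd. \<sigma> sd * ud F sd t) = 0)"
proof -
  let ?c = "coverage F"
  \<comment> \<open>A distribution on pairs with marginals ?c; its weights are nonnegative for F \<le> 4.\<close>
  define \<sigma> where "\<sigma> sd =
    (if sd = {TA,TD} then ?c TA
     else if sd = {TB,TC} then 1 - ?c TD
     else if sd = {TB,TD} then ?c TB + ?c TD - 1
     else if sd = {TC,TD} then ?c TC + ?c TD - 1 else 0)" for sd
  have "0 \<le> ?c TA" "1/3 \<le> ?c TB" "1/2 \<le> ?c TC" "3/4 \<le> ?c TD" "?c TD \<le> 1"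
    using assms(1,2) by (simp_all add: coverage_def field_simps)
  then have "mixed Sd \<sigma>"
    using total by (simp add: mixed_def Sd_def \<sigma>_def sum_Sa doubleton_eq_iff)
  moreover have "(\<Sum>sd\<in>Sd. if t \<in> sd then \<sigma> sd else 0) = ?c t" for t
    using total by (cases t) (simp_all add: Sd_def \<sigma>_def sum_Sa doubleton_eq_iff)
  ultimately have "(\<Sum>sd\<in>Sd. \<sigma> sd * ud F sd t) = 0" for t
    using coverage_indifferent[of F t] assms(1) by (simp add: sum_mult_ud mixed_def)
  then show ?thesis using \<open>mixed Sd \<sigma>\<close> by blast
qed

lemma U_EUT_d_eq_row_payoff: "U_EUT_d F = row_payoff (\<lambda>x. x) Sd Sa (ud F)"
  by (intro ext) (simp add: U_EUT_d_def row_payoff_def)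

lemma U_EUT_a_eq_col_payoff: "U_EUT_a F = col_payoff (\<lambda>x. x) Sd Sa (ud F)"
  by (intro ext) (simp add: U_EUT_a_def col_payoff_def ua_def sum.swap[of _ Sd] ac_simps)

lemma U_PT_d_eq_row_payoff: "U_PT_d \<alpha> F = row_payoff (wgt \<alpha>) Sd Sa (ud F)"
  by (intro ext) (simp add: U_PT_d_def row_payoff_def)

lemma U_PT_a_eq_col_payoff: "U_PT_a \<alpha> F = col_payoff (wgt \<alpha>) Sd Sa (ud F)"
  by (intro ext) (simp add: U_PT_a_def col_payoff_def ua_def)

lemma is_MSNE_if_weights_equalizing:
  assumes "mixed Sd pd" "mixed Sa pa"
    and "\<And>t. t \<in> Sa \<Longrightarrow> wd (pa t) = l * \<tau> t" "\<And>sd. sd \<in> Sd \<Longrightarrow> wa (pd sd) = m * \<sigma> sd"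
    and "\<And>sd. sd \<in> Sd \<Longrightarrow> (\<Sum>t\<in>Sa. \<tau> t * ud F sd t) = 0"
    and "\<And>t. t \<in> Sa \<Longrightarrow> (\<Sum>sd\<in>Sd. \<sigma> sd * ud F sd t) = 0"
  shows "is_MSNE (row_payoff wd Sd Sa (ud F)) (col_payoff wa Sd Sa (ud F)) pd pa"
  using assms row_payoff_eq_0_if_weights_equalizing[of Sa wd pa l \<tau> Sd "ud F"]
    col_payoff_eq_0_if_weights_equalizing[of Sd wa pd m \<sigma> Sa "ud F"]
  unfolding is_MSNE_def by simp

lemma finite_Sa: "finite Sa" and finite_Sd: "finite Sd"
  by (simp_all add: Sa_def Sd_def)

theorem theorem3:
  shows "(\<exists>F. (\<exists>pd pa. MSNE_EUT F pd pa) \<and>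
              (\<forall>pd pa. MSNE_EUT F pd pa \<longrightarrow> U_EUT_d F pd pa = 0 \<and> U_EUT_a F pd pa = 0))
       \<and> (\<forall>\<alpha>d \<alpha>a. 0 < \<alpha>d \<and> \<alpha>d \<le> 1 \<and> 0 < \<alpha>a \<and> \<alpha>a \<le> 1 \<longrightarrow>
           (\<exists>F. (\<exists>pd pa. MSNE_PT \<alpha>d \<alpha>a F pd pa) \<and>
                (\<forall>pd pa. MSNE_PT \<alpha>d \<alpha>a F pd pa \<longrightarrow>
                   U_PT_d \<alpha>d F pd pa = 0 \<and> U_PT_a \<alpha>a F pd pa = 0)))"
proof -
  obtain F where F: "3 \<le> F" "F \<le> 4" "(\<Sum>t\<in>Sa. coverage F t) = 2"
    using ex_fine_total_coverage_2 by blast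
  obtain \<sigma> where \<sigma>: "mixed Sd \<sigma>" "\<forall>t\<in>Sa. (\<Sum>sd\<in>Sd. \<sigma> sd * ud F sd t) = 0"
    using defender_equalizer[OF _ F(2,3)] F(1) by auto
  obtain \<tau> where \<tau>: "mixed Sa \<tau>" "\<forall>sd\<in>Sd. (\<Sum>t\<in>Sa. \<tau> t * ud F sd t) = 0"
    using attacker_equalizer[OF _ F(3)] F(1) by auto
  have value_0: "row_payoff wd Sd Sa (ud F) pd pa = 0 \<and> col_payoff wa Sd Sa (ud F) pd pa = 0"
    if "prob_weighting wd" "prob_weighting wa"
      "is_MSNE (row_payoff wd Sd Sa (ud F)) (col_payoff wa Sd Sa (ud F)) pd pa" for wd wa pd pa
    using weighted_game_value_eq_0[OF finite_Sd finite_Sa that(1,2) _ _ _ _ \<sigma>(1) _ \<tau>(1)] that(3) \<sigma>(2) \<tau>(2)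
    unfolding is_MSNE_def by blast
  have "is_MSNE (row_payoff (\<lambda>x. x) Sd Sa (ud F)) (col_payoff (\<lambda>x. x) Sd Sa (ud F)) \<sigma> \<tau>"
    by (rule is_MSNE_if_weights_equalizing[where l=1 and m=1]) (use \<sigma> \<tau> in auto)
  moreover have "\<exists>pd pa. MSNE_PT \<alpha>d \<alpha>a F pd pa"
    if \<alpha>: "0 < \<alpha>d" "\<alpha>d \<le> 1" "0 < \<alpha>a" "\<alpha>a \<le> 1" for \<alpha>d \<alpha>a
  proof -
    obtain pa l where "mixed Sa pa" "\<forall>t\<in>Sa. wgt \<alpha>d (pa t) = l * \<tau> t"
      using ex_mixed_wgt_proportional[OF \<alpha>(1,2) finite_Sa \<tau>(1)] by blast
    moreover obtain pd m where "mixed Sd pd" "\<forall>sd\<in>Sd. wgt \<alpha>a (pd sd) = m * \<sigma> sd"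
      using ex_mixed_wgt_proportional[OF \<alpha>(3,4) finite_Sd \<sigma>(1)] by blast
    ultimately show ?thesis
      unfolding MSNE_PT_def U_PT_d_eq_row_payoff U_PT_a_eq_col_payoff
      using is_MSNE_if_weights_equalizing \<sigma>(2) \<tau>(2) by blast
  qed
  ultimately show ?thesis
    using value_0 prob_weighting_id prob_weighting_wgt
    unfolding MSNE_EUT_def MSNE_PT_def U_EUT_d_eq_row_payoff U_EUT_a_eq_col_payoff
      U_PT_d_eq_row_payoff U_PT_a_eq_col_payoff
    by blast
qed

end
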